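(* Let $\boldsymbol\nu=\{\nu_t\}_{t>0}$ be a measurable factorizing family over $[0,1]\times\{\ast\}$. Fix $s,t>0$, set $u=\lambda(s+t)$, $u_1=\lambda s$, $u_2=\lambda t$, and assume that for all sufficiently small $u$: (A) under $\nu_u(\cdot\mid Z\neq\varnothing)$ the anchor $\alpha_u(Z)$ is uniform on $(0,u)$; (D) $\nu_u(\mathrm{diam}_u(Z)\ge u^2\mid Z\neq\varnothing)\le u$. Let $E_{10}=\{Z\cap[0,u_1]\neq\varnothing,\ Z\cap(u_1,u]=\varnothing\}$, $E_{01}=\{Z\cap[0,u_1]=\varnothing,\ Z\cap[u_1,u]\neq\varnothing\}$, $R_{0,u_1}(Z)=Z\cap[0,u_1]$, $R_{u_1,u}(Z)=(Z\cap[u_1,u])-u_1$; let $\widehat\nu_u^{10}$ be the law of $R_{0,u_1}(Z)$ under $\nu_u(\cdot\mid E_{10})$, $\widehat\nu_u^{01}$ the law of $R_{u_1,u}(Z)$ under $\nu_u(\cdot\mid E_{01})$, $\bar\nu_u^{(u_1)}$ the law of $R_{0,u_1}(Z)$ under $\nu_u(\cdot\mid R_{0,u_1}(Z)\neq\varnothing)$, and $\bar\nu_u^{(u_2)}$ the law of $R_{u_1,u}(Z)$ under $\nu_u(\cdot\mid R_{u_1,u}(Z)\neq\varnothing)$. Then there is $C_{s,t}<\infty$ such that for all sufficiently small $\lambda>0$, $\|\widehat\nu_u^{10}-\bar\nu_u^{(u_1)}\|_{\mathrm{TV}}\le C_{s,t}u$ and $\|\widehat\nu_u^{01}-\bar\nu_u^{(u_2)}\|_{\mathrm{TV}}\le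 C_{s,t}u$.
   Context: $\mathscr C_t^{\{\ast\}}$ is the space of closed subsets of $[0,t]$ with Borel $\sigma$-field $\Sigma_t$ of the Fell topology; $\oplus_{s,t}(Z_1,Z_2)=Z_1\cup(s+Z_2)$; $\sigma_t(Z)=\{r/t:r\in Z\}$. A measurable factorizing family over $[0,1]\times\{\ast\}$ is a family of probability measures $\nu_t$ on $\mathscr C_t^{\{\ast\}}$ with: (i) $\nu_{s+t}$ and $(\nu_s\otimes\nu_t)\circ\oplus_{s,t}^{-1}$ mutually absolutely continuous; (ii) $\nu_t(\{Z:r\in Z\})=0$ for all $r\in[0,t]$; (iii) no $\nu_t$ supported on finitely many atoms; (iv a) a countable ring $\mathcal R\subset\Sigma_1$ generating $\Sigma_1$ with $t\mapsto(\sigma_t)_*\nu_t(A)$ Borel for $A\in\mathcal R$; (iv b) a Borel $\Delta$ on $(0,\infty)^2\times\mathscr C_1^{\{\ast\}}$ with $\Delta(s,t,\sigma_{s+t}(Z))=d((\nu_s\otimes\nu_t)\circ\oplus_{s,t}^{-1})/d\nu_{s+t}(Z)$ a.e. Anchor: $\alpha_u(Z)=\inf Z$ ($0$ if empty); spread: $\mathrm{diam}_u(Z)=\sup Z-\inf Z$ ($0$ if empty). $\|\rho-\eta\|_{\mathrm{TV}}=\sup_A|\rho(A)-\eta(A)|$. *)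

theory Defs
  imports "HOL-Probability.Probability"
begin

definition closed_subsets :: "real \<Rightarrow> real set set" where
  "closed_subsets t = {Z. closed Z \<and> Z \<subseteq> {0..t}}"

definition fell_topology :: "real \<Rightarrow> real set topology" where
  "fell_topology t = subtopology
     (topology_generated_by
        ({{Z. Z \<inter> K = {}} | K. compact K} \<union> {{Z. Z \<inter> G \<noteq> {}} | G. open G}))
     (closed_subsets t)"

definition borel_sigma_of :: "'a topology \<Rightarrow> 'a measure" where
  "borel_sigma_of T = sigma (topspace T) (Collect (openin T))"

definition Cmeas :: "real \<Rightarrow> real set measure" where
  "Cmeas t = borel_sigma_of (fell_topology t)"

definition oplus :: "real \<Rightarrow> real set \<times> real set \<Rightarrow> real set" where
  "oplus s = (\<lambda>(Z1, Z2). Z1 \<union> (\<lambda>r. s + r) ` Z2)"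

definition sigma_scale :: "real \<Rightarrow> real set \<Rightarrow> real set" where
  "sigma_scale t Z = (\<lambda>r. r / t) ` Z"

definition measurable_factorizing_family :: "(real \<Rightarrow> real set measure) \<Rightarrow> bool" where
  "measurable_factorizing_family \<nu> \<longleftrightarrow>
     (\<forall>t>0. prob_space (\<nu> t) \<and> sets (\<nu> t) = sets (Cmeas t)) \<and>
     \<comment> \<open>(i) mutual absolute continuity\<close>
     (\<forall>s>0. \<forall>t>0.
        absolutely_continuous (\<nu> (s + t)) (distr (\<nu> s \<Otimes>\<^sub>M \<nu> t) (Cmeas (s + t)) (oplus s)) \<and>
        absolutely_continuous (distr (\<nu> s \<Otimes>\<^sub>M \<nu> t) (Cmeas (s + t)) (oplus s)) (\<nu> (s + t))) \<and>
     \<comment> \<open>(ii) no fixed points\<close>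
     (\<forall>t>0. \<forall>r\<in>{0..t}. measure (\<nu> t) {Z \<in> space (Cmeas t). r \<in> Z} = 0) \<and>
     \<comment> \<open>(iii) no nu_t supported on finitely many atoms\<close>
     (\<forall>t>0. \<not> (\<exists>S. finite S \<and> S \<subseteq> space (Cmeas t) \<and> measure (\<nu> t) S = 1)) \<and>
     \<comment> \<open>(iv a)\<close>
     (\<exists>R. countable R \<and> ring_of_sets (space (Cmeas 1)) R \<and>
          sigma_sets (space (Cmeas 1)) R = sets (Cmeas 1) \<and>
          (\<forall>A\<in>R. (\<lambda>t. measure (distr (\<nu> t) (Cmeas 1) (sigma_scale t)) A)
                     \<in> borel_measurable (restrict_space borel {0<..}))) \<and>
     \<comment> \<open>(iv b)\<close>
     (\<exists>\<Delta> :: (real \<times> real) \<times> real set \<Rightarrow> ennreal.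
        \<Delta> \<in> borel_measurable
              ((restrict_space borel {0<..} \<Otimes>\<^sub>M restrict_space borel {0<..}) \<Otimes>\<^sub>M Cmeas 1) \<and>
        (\<forall>s>0. \<forall>t>0. AE Z in \<nu> (s + t).
            \<Delta> ((s, t), sigma_scale (s + t) Z)
              = RN_deriv (\<nu> (s + t)) (distr (\<nu> s \<Otimes>\<^sub>M \<nu> t) (Cmeas (s + t)) (oplus s)) Z))"

definition anchor :: "real set \<Rightarrow> real" where
  "anchor Z = (if Z = {} then 0 else Inf Z)"

definition spread :: "real set \<Rightarrow> real" where
  "spread Z = (if Z = {} then 0 else Sup Z - Inf Z)"

definition tv_dist :: "'a measure \<Rightarrow> 'a measure \<Rightarrow> real" where
  "tv_dist M N = (SUP A\<in>sets M. \<bar>measure M A - measure N A\<bar>)"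

definition cond :: "'a measure \<Rightarrow> 'a set \<Rightarrow> 'a measure" where
  "cond M E = uniform_measure M E"

end

theory Submission
  imports Defs
begin

(* For nested events E \<subseteq> F, conditioning on E instead of F moves the law of any statistic by
   at most P(F - E) / P(F) in total variation.  On the left E = E10 and F = {Z hits [0,u1]}, on
   the right E = E01 and F = {Z hits [u1,u]}.  In both cases every Z in F - E hits [0,u1] and
   [u1,u], so either its spread is at least u^2 or its anchor lies in (u1 - u^2, u1]; by (D)
   and (A) respectively, each of these has probability at most u P(Z \<noteq> {}).  By (A)
   again P(F) is at least P(Z \<noteq> {}) u1 / u, resp. P(Z \<noteq> {}) u2 / u.  Hence the distances are
   at most 2 u^2 / u1 = 2 (s + t) u / s and 2 (s + t) u / t.  Measurability of the restriction
   maps rests on the Fell sigma-algebra being generated by the events "Z misses K" for compact K,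
   which follows from a countable base of rational interval tests. *)

section \<open>The Fell sigma-algebra\<close>

definition fell_subbasis :: "real set set set" where
  "fell_subbasis = {{Z. Z \<inter> K = {}} | K. compact K} \<union> {{Z. Z \<inter> G \<noteq> {}} | G. open G}"

lemma fell_topology_eq:
  "fell_topology t = subtopology (topology_generated_by fell_subbasis) (closed_subsets t)"
  by (simp add: fell_topology_def fell_subbasis_def)

lemma topspace_fell_topology: "topspace (fell_topology t) = closed_subsets t"
proof -
  have "UNIV \<in> fell_subbasis"
    unfolding fell_subbasis_def by (intro UnI1 CollectI exI[of _ "{}"]) auto
  then show ?thesis
    by (auto simp: fell_topology_eq)
qed

lemma space_Cmeas: "space (Cmeas t) = closed_subsets t"
  by (simp add: Cmeas_def borel_sigma_of_def topspace_fell_topology space_measure_of_conv)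

lemma sets_Cmeas_open:
  "sets (Cmeas t) = sigma_sets (closed_subsets t) (Collect (openin (fell_topology t)))"
  using openin_subset[of "fell_topology t"]
  by (auto simp: Cmeas_def borel_sigma_of_def topspace_fell_topology intro!: sets_measure_of)

lemma openin_fell_topology_in_sets: "openin (fell_topology t) U \<Longrightarrow> U \<in> sets (Cmeas t)"
  by (simp add: sets_Cmeas_open sigma_sets.Basic)

lemma fell_subbasis_in_sets_Cmeas:
  assumes "S \<in> fell_subbasis"
  shows "{Z \<in> space (Cmeas t). Z \<in> S} \<in> sets (Cmeas t)"
proof (rule openin_fell_topology_in_sets)
  show "openin (fell_topology t) {Z \<in> space (Cmeas t). Z \<in> S}"
    unfolding fell_topology_eq openin_subtopology space_Cmeas
    using assms by (auto intro!: exI[of _ S] topology_generated_by_Basis)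
qed

lemma miss_compact_in_sets_Cmeas:
  assumes "compact K"
  shows "{Z \<in> space (Cmeas t). Z \<inter> K = {}} \<in> sets (Cmeas t)"
proof -
  have "{Z. Z \<inter> K = {}} \<in> fell_subbasis"
    unfolding fell_subbasis_def using assms by blast
  from fell_subbasis_in_sets_Cmeas[OF this] show ?thesis
    by simp
qed

lemma hit_open_in_sets_Cmeas:
  assumes "open G"
  shows "{Z \<in> space (Cmeas t). Z \<inter> G \<noteq> {}} \<in> sets (Cmeas t)"
proof -
  have "{Z. Z \<inter> G \<noteq> {}} \<in> fell_subbasis"
    unfolding fell_subbasis_def using assms by blast
  from fell_subbasis_in_sets_Cmeas[OF this] show ?thesis
    by simp
qed

lemma hit_compact_in_sets_Cmeas:
  assumes "compact K"
  shows "{Z \<in> space (Cmeas t). Z \<inter> K \<noteq> {}} \<in> sets (Cmeas t)"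
proof -
  have "{Z \<in> space (Cmeas t). Z \<inter> K \<noteq> {}} = space (Cmeas t) - {Z \<in> space (Cmeas t). Z \<inter> K = {}}"
    by auto
  then show ?thesis
    using miss_compact_in_sets_Cmeas[OF assms] by auto
qed

(* Finite lists of rational interval tests form a countable local base of the Fell topology at
   every closed set, so each Fell-open event is a countable union of test events. *)
definition fell_tests :: "(rat \<times> rat \<times> bool) list \<Rightarrow> real set set" where
  "fell_tests ts = {Z. \<forall>(a, b, h) \<in> set ts. (Z \<inter> {of_rat a..of_rat b} \<noteq> {}) = h}"

lemma fell_tests_append: "fell_tests (ts @ ts') = fell_tests ts \<inter> fell_tests ts'"
  unfolding fell_tests_def set_append ball_Un by blast

lemma rat_interval_within_open:
  fixes x :: real
  assumes "open G" "x \<in> G"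
  obtains a b :: rat where "of_rat a < x" "x < of_rat b" "{of_rat a..of_rat b} \<subseteq> G"
proof -
  obtain e where e: "e > 0" "ball x e \<subseteq> G"
    using assms open_contains_ball by blast
  obtain a where a: "a \<in> \<rat>" "x - e < a" "a < x"
    using Rats_dense_in_real[of "x - e" x] e(1) by auto
  obtain b where b: "b \<in> \<rat>" "x < b" "b < x + e"
    using Rats_dense_in_real[of x "x + e"] e(1) by auto
  obtain a' b' where "a = of_rat a'" "b = of_rat b'"
    using a(1) b(1) Rats_cases by metis
  moreover have "{a..b} \<subseteq> ball x e"
    using a b by (auto simp: dist_real_def)
  ultimately show ?thesis
    using that[of a' b'] a b e(2) by auto
qed

lemma fell_tests_miss_compact:
  assumes "compact K" "closed Z" "Z \<inter> K = {}"
  shows "\<exists>ts. Z \<in> fell_tests ts \<and> fell_tests ts \<subseteq> {Z'. Z' \<inter> K = {}}"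
proof -
  define I :: "rat \<times> rat \<Rightarrow> real set" where "I p = {of_rat (fst p)..of_rat (snd p)}" for p
  define C where "C = {p. Z \<inter> I p = {}}"
  have "K \<subseteq> (\<Union>p\<in>C. interior (I p))"
  proof
    fix x assume "x \<in> K"
    then obtain a b where "of_rat a < x" "x < of_rat b" "{of_rat a..of_rat b} \<subseteq> - Z"
      using rat_interval_within_open[of "- Z" x] assms by blast
    then have "(a, b) \<in> C" "x \<in> interior (I (a, b))"
      unfolding C_def I_def by auto
    then show "x \<in> (\<Union>p\<in>C. interior (I p))"
      by blast
  qed
  then obtain C' where C': "C' \<subseteq> C" "finite C'" "K \<subseteq> (\<Union>p\<in>C'. interior (I p))"
    using compactE_image[OF assms(1), of C "\<lambda>p. interior (I p)"] by auto
  obtain cs where cs: "set cs = C'"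
    using finite_list[OF C'(2)] by blast
  define ts where "ts = map (\<lambda>p. (fst p, snd p, False)) cs"
  have tests: "Z' \<in> fell_tests ts \<longleftrightarrow> (\<forall>p\<in>C'. Z' \<inter> I p = {})" for Z'
    unfolding ts_def fell_tests_def I_def cs[symmetric] by (auto simp: split_beta)
  have "Z \<in> fell_tests ts"
    using C'(1) unfolding tests C_def by auto
  moreover have "fell_tests ts \<subseteq> {Z'. Z' \<inter> K = {}}"
  proof safe
    fix Z' x assume "Z' \<in> fell_tests ts" "x \<in> Z'" "x \<in> K"
    then obtain p where "x \<in> I p" "Z' \<inter> I p = {}"
      using C'(3) interior_subset unfolding tests by blast
    with \<open>x \<in> Z'\<close> show "x \<in> {}"
      by blast
  qed
  ultimately show ?thesis by blast
qed

lemma fell_tests_hit_open: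
  assumes "open G" "Z \<inter> G \<noteq> {}"
  shows "\<exists>ts. Z \<in> fell_tests ts \<and> fell_tests ts \<subseteq> {Z'. Z' \<inter> G \<noteq> {}}"
proof -
  obtain z where "z \<in> Z" "z \<in> G"
    using assms(2) by blast
  then obtain a b where "of_rat a < z" "z < of_rat b" "{of_rat a..of_rat b} \<subseteq> G"
    using rat_interval_within_open assms(1) by blast
  then have "Z \<in> fell_tests [(a, b, True)]" "fell_tests [(a, b, True)] \<subseteq> {Z'. Z' \<inter> G \<noteq> {}}"
    using \<open>z \<in> Z\<close> unfolding fell_tests_def by fastforce+
  then show ?thesis by blast
qed

lemma fell_tests_local_base:
  assumes "generate_topology_on fell_subbasis V" "Z \<in> V" "closed Z"
  shows "\<exists>ts. Z \<in> fell_tests ts \<and> fell_tests ts \<subseteq> V"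
  using assms
proof (induction arbitrary: Z rule: generate_topology_on.induct)
  case Empty
  then show ?case by simp
next
  case (Int V W)
  then obtain ts ts' where
    "Z \<in> fell_tests ts" "fell_tests ts \<subseteq> V" "Z \<in> fell_tests ts'" "fell_tests ts' \<subseteq> W"
    by (meson IntD1 IntD2)
  then show ?case
    by (intro exI[of _ "ts @ ts'"]) (auto simp: fell_tests_append)
next
  case (UN \<V>)
  then show ?case by blast
next
  case (Basis V)
  then consider K where "compact K" "V = {Z. Z \<inter> K = {}}" | G where "open G" "V = {Z. Z \<inter> G \<noteq> {}}"
    unfolding fell_subbasis_def by blast
  then show ?case
    using Basis.prems fell_tests_miss_compact fell_tests_hit_open by cases auto
qed

lemma fell_tests_vimage_in_sets:
  assumes miss: "\<And>K. compact K \<Longrightarrow> {x \<in> space M. f x \<inter> K = {}} \<in> sets M"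
  shows "{x \<in> space M. f x \<in> fell_tests ts} \<in> sets M"
proof (induction ts)
  case Nil
  then show ?case
    by (simp add: fell_tests_def)
next
  case (Cons test ts)
  obtain a b h where test: "test = (a, b, h)"
    by (cases test) auto
  define miss_ab where "miss_ab = {x \<in> space M. f x \<inter> {of_rat a..of_rat b} = {}}"
  have "miss_ab \<in> sets M"
    unfolding miss_ab_def by (rule miss) (rule compact_Icc)
  moreover have "{x \<in> space M. f x \<in> fell_tests (test # ts)}
      = (if h then space M - miss_ab else miss_ab) \<inter> {x \<in> space M. f x \<in> fell_tests ts}"
    unfolding test miss_ab_def fell_tests_def by auto
  ultimately show ?case
    using Cons.IH by auto
qed

lemma measurable_CmeasI:
  assumes f: "f \<in> space M \<rightarrow> closed_subsets t"
    and miss: "\<And>K. compact K \<Longrightarrow> {x \<in> space M. f x \<inter> K = {}} \<in> sets M"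
  shows "f \<in> measurable M (Cmeas t)"
  unfolding Cmeas_def borel_sigma_of_def
proof (rule measurable_measure_of)
  show "Collect (openin (fell_topology t)) \<subseteq> Pow (topspace (fell_topology t))"
    using openin_subset by blast
  show "f \<in> space M \<rightarrow> topspace (fell_topology t)"
    using f by (simp add: topspace_fell_topology)
  fix U assume "U \<in> Collect (openin (fell_topology t))"
  then obtain V where V: "generate_topology_on fell_subbasis V" "U = V \<inter> closed_subsets t"
    by (auto simp: fell_topology_eq openin_subtopology openin_topology_generated_by_iff)
  have "f -` U \<inter> space M = (\<Union>ts\<in>{ts. fell_tests ts \<subseteq> V}. {x \<in> space M. f x \<in> fell_tests ts})"
    (is "_ = ?tests")
  proof
    show "f -` U \<inter> space M \<subseteq> ?tests"
    proof
      fix x assume x: "x \<in> f -` U \<inter> space M"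
      then have "f x \<in> V" "closed (f x)"
        using f V(2) by (auto simp: closed_subsets_def)
      then obtain ts where "f x \<in> fell_tests ts" "fell_tests ts \<subseteq> V"
        using fell_tests_local_base[OF V(1)] by blast
      with x show "x \<in> ?tests"
        by blast
    qed
    show "?tests \<subseteq> f -` U \<inter> space M"
      using f V(2) by auto
  qed
  also have "\<dots> \<in> sets M"
    by (rule sets.countable_UN''[OF countableI_type fell_tests_vimage_in_sets[OF miss]])
  finally show "f -` U \<inter> space M \<in> sets M" .
qed

lemma measurable_restrict_Cmeas: "(\<lambda>Z. Z \<inter> {0..c}) \<in> measurable (Cmeas u) (Cmeas c)"
proof (rule measurable_CmeasI)
  show "(\<lambda>Z. Z \<inter> {0..c}) \<in> space (Cmeas u) \<rightarrow> closed_subsets c"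
    by (auto simp: space_Cmeas closed_subsets_def)
  fix K :: "real set" assume "compact K"
  then show "{Z \<in> space (Cmeas u). Z \<inter> {0..c} \<inter> K = {}} \<in> sets (Cmeas u)"
    using miss_compact_in_sets_Cmeas[of "{0..c} \<inter> K" u] by (simp add: Int_assoc compact_Int)
qed

lemma measurable_shift_restrict_Cmeas:
  assumes "u \<le> c + d"
  shows "(\<lambda>Z. (\<lambda>r. r - c) ` (Z \<inter> {c..u})) \<in> measurable (Cmeas u) (Cmeas d)"
proof (rule measurable_CmeasI)
  show "(\<lambda>Z. (\<lambda>r. r - c) ` (Z \<inter> {c..u})) \<in> space (Cmeas u) \<rightarrow> closed_subsets d"
    using assms by (auto simp: space_Cmeas closed_subsets_def intro!: closed_translation_subtract)
  fix K :: "real set" assume "compact K"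
  have "(\<lambda>r. r - c) ` (Z \<inter> {c..u}) \<inter> K = (\<lambda>r. r - c) ` (Z \<inter> ({c..u} \<inter> (+) c ` K))" for Z
    by (simp add: image_Int inj_on_def image_image Int_assoc)
  then have "(\<lambda>r. r - c) ` (Z \<inter> {c..u}) \<inter> K = {} \<longleftrightarrow> Z \<inter> ({c..u} \<inter> (+) c ` K) = {}" for Z
    by simp
  then show "{Z \<in> space (Cmeas u). (\<lambda>r. r - c) ` (Z \<inter> {c..u}) \<inter> K = {}} \<in> sets (Cmeas u)"
    using miss_compact_in_sets_Cmeas[of "{c..u} \<inter> (+) c ` K" u] \<open>compact K\<close>
    by (simp add: compact_Int compact_translation)
qed

lemma closed_subsets_Inf_Sup:
  assumes "Z \<in> closed_subsets u" "Z \<noteq> {}"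
  shows "Inf Z \<in> Z" "Sup Z \<in> Z" "Z \<subseteq> {Inf Z..Sup Z}" "Z \<subseteq> {0..u}"
proof -
  have Z: "closed Z" "Z \<subseteq> {0..u}"
    using assms(1) by (auto simp: closed_subsets_def)
  then have "bdd_below Z" "bdd_above Z"
    by (auto intro: bdd_below_mono bdd_above_mono)
  then show "Inf Z \<in> Z" "Sup Z \<in> Z" "Z \<subseteq> {Inf Z..Sup Z}"
    using Z(1) assms(2)
    by (auto intro: closed_contains_Inf closed_contains_Sup cInf_lower cSup_upper)
  show "Z \<subseteq> {0..u}"
    by (fact Z(2))
qed

definition rightmost :: "real set \<Rightarrow> real" where
  "rightmost Z = (if Z = {} then 0 else Sup Z)"

lemma spread_eq_rightmost_minus_anchor: "spread Z = rightmost Z - anchor Z"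
  by (simp add: spread_def rightmost_def anchor_def)

lemma anchor_le_iff:
  assumes "Z \<in> closed_subsets u"
  shows "anchor Z \<le> a \<longleftrightarrow> Z \<inter> {0..a} \<noteq> {} \<or> (Z = {} \<and> 0 \<le> a)"
proof (cases "Z = {}")
  case False
  note Z = closed_subsets_Inf_Sup[OF assms False]
  have "Inf Z \<le> a \<longleftrightarrow> Z \<inter> {0..a} \<noteq> {}"
  proof
    assume "Inf Z \<le> a"
    with Z(1,4) have "Inf Z \<in> Z \<inter> {0..a}"
      by auto
    then show "Z \<inter> {0..a} \<noteq> {}"
      by blast
  next
    assume "Z \<inter> {0..a} \<noteq> {}"
    then obtain z where "z \<in> Z" "z \<le> a"
      by auto
    with Z(3) show "Inf Z \<le> a"
      by fastforce
  qed
  with False show ?thesis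
    by (simp add: anchor_def)
qed (simp add: anchor_def)

lemma rightmost_ge_iff:
  assumes "Z \<in> closed_subsets u"
  shows "a \<le> rightmost Z \<longleftrightarrow> Z \<inter> {a..u} \<noteq> {} \<or> (Z = {} \<and> a \<le> 0)"
proof (cases "Z = {}")
  case False
  note Z = closed_subsets_Inf_Sup[OF assms False]
  have "a \<le> Sup Z \<longleftrightarrow> Z \<inter> {a..u} \<noteq> {}"
  proof
    assume "a \<le> Sup Z"
    with Z(2,4) have "Sup Z \<in> Z \<inter> {a..u}"
      by auto
    then show "Z \<inter> {a..u} \<noteq> {}"
      by blast
  next
    assume "Z \<inter> {a..u} \<noteq> {}"
    then obtain z where "z \<in> Z" "a \<le> z"
      by auto
    with Z(3) show "a \<le> Sup Z"
      by fastforce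
  qed
  with False show ?thesis
    by (simp add: rightmost_def)
qed (simp add: rightmost_def)

lemma empty_in_sets_Cmeas: "{Z \<in> space (Cmeas u). Z = {}} \<in> sets (Cmeas u)"
proof -
  have "{Z \<in> space (Cmeas u). Z = {}} = {Z \<in> space (Cmeas u). Z \<inter> {0..u} = {}}"
    by (auto simp: space_Cmeas closed_subsets_def)
  then show ?thesis
    using miss_compact_in_sets_Cmeas[of "{0..u}" u] by simp
qed

lemma borel_measurable_anchor: "anchor \<in> borel_measurable (Cmeas u)"
  unfolding borel_measurable_iff_le
proof
  fix a :: real
  have "{Z \<in> space (Cmeas u). anchor Z \<le> a}
      = {Z \<in> space (Cmeas u). Z \<inter> {0..a} \<noteq> {}} \<union> {Z \<in> space (Cmeas u). Z = {} \<and> 0 \<le> a}"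
    by (rule set_eqI) (simp add: space_Cmeas anchor_le_iff cong: conj_cong; blast)
  moreover have "{Z \<in> space (Cmeas u). Z = {} \<and> 0 \<le> a} \<in> sets (Cmeas u)"
    using empty_in_sets_Cmeas[of u] by (cases "0 \<le> a") simp_all
  ultimately show "{Z \<in> space (Cmeas u). anchor Z \<le> a} \<in> sets (Cmeas u)"
    using hit_compact_in_sets_Cmeas[of "{0..a}" u] by (simp add: sets.Un)
qed

lemma borel_measurable_rightmost: "rightmost \<in> borel_measurable (Cmeas u)"
  unfolding borel_measurable_iff_ge
proof
  fix a :: real
  have "{Z \<in> space (Cmeas u). a \<le> rightmost Z}
      = {Z \<in> space (Cmeas u). Z \<inter> {a..u} \<noteq> {}} \<union> {Z \<in> space (Cmeas u). Z = {} \<and> a \<le> 0}"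
    by (rule set_eqI) (simp add: space_Cmeas rightmost_ge_iff cong: conj_cong; blast)
  moreover have "{Z \<in> space (Cmeas u). Z = {} \<and> a \<le> 0} \<in> sets (Cmeas u)"
    using empty_in_sets_Cmeas[of u] by (cases "a \<le> 0") simp_all
  ultimately show "{Z \<in> space (Cmeas u). a \<le> rightmost Z} \<in> sets (Cmeas u)"
    using hit_compact_in_sets_Cmeas[of "{a..u}" u] by (simp add: sets.Un)
qed

lemma borel_measurable_spread: "spread \<in> borel_measurable (Cmeas u)"
  unfolding spread_eq_rightmost_minus_anchor[abs_def]
  using borel_measurable_rightmost borel_measurable_anchor by (rule borel_measurable_diff)

section \<open>Conditioning on nested events\<close>

lemma (in prob_space) measure_cond:
  assumes "E \<in> events" "X \<in> events"
  shows "measure (cond M E) X = measure M (E \<inter> X) / measure M E"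
proof (cases "measure M E = 0")
  case True
  then have "emeasure M E = 0"
    using assms(1) by (simp add: emeasure_eq_measure)
  then have "emeasure M (E \<inter> X) = 0"
    using assms by (meson Int_lower1 emeasure_eq_0 sets.Int)
  then have "emeasure (cond M E) X = 0"
    using assms by (simp add: cond_def)
  then show ?thesis
    using True by (simp add: measure_def)
next
  case False
  then have "emeasure M E \<noteq> 0"
    using assms(1) by (simp add: emeasure_eq_measure)
  then show ?thesis
    using assms(2) by (simp add: cond_def)
qed

lemma abs_ratio_diff_le:
  fixes x y e d :: real
  assumes "0 \<le> x" "x \<le> e" "0 \<le> y" "y \<le> d"
  shows "\<bar>x / e - (x + y) / (e + d)\<bar> \<le> d / (e + d)"
proof (cases "e = 0")
  case True
  with assms show ?thesis
    by simp
next
  case False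
  with assms have "0 < e" "0 \<le> d"
    by linarith+
  have "0 \<le> x * d" "x * d \<le> e * d" "0 \<le> y * e" "y * e \<le> d * e"
    using assms \<open>0 < e\<close> \<open>0 \<le> d\<close> by (simp_all add: mult_right_mono)
  then have "\<bar>x * d - y * e\<bar> \<le> e * d"
    by (simp add: abs_le_iff algebra_simps)
  then have "\<bar>x * d - y * e\<bar> / (e * (e + d)) \<le> e * d / (e * (e + d))"
    using \<open>0 < e\<close> \<open>0 \<le> d\<close> by (intro divide_right_mono) auto
  moreover have "x / e - (x + y) / (e + d) = (x * d - y * e) / (e * (e + d))"
    using \<open>0 < e\<close> \<open>0 \<le> d\<close> by (simp add: field_simps)
  ultimately show ?thesis
    using \<open>0 < e\<close> \<open>0 \<le> d\<close> by (simp add: abs_div)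
qed

lemma (in prob_space) abs_measure_cond_diff_le:
  assumes "E \<in> events" "F \<in> events" "E \<subseteq> F" "X \<in> events"
  shows "\<bar>measure (cond M E) X - measure (cond M F) X\<bar> \<le> prob (F - E) / prob F"
proof -
  have F: "prob F = prob E + prob (F - E)"
    using finite_measure_Diff[OF assms(2,1,3)] by simp
  have "prob ((E \<inter> X) \<union> ((F - E) \<inter> X)) = prob (E \<inter> X) + prob ((F - E) \<inter> X)"
    using assms by (intro finite_measure_Union) auto
  moreover have "(E \<inter> X) \<union> ((F - E) \<inter> X) = F \<inter> X"
    using assms(3) by auto
  ultimately have FX: "prob (F \<inter> X) = prob (E \<inter> X) + prob ((F - E) \<inter> X)"
    by simp
  have "\<bar>measure (cond M E) X - measure (cond M F) X\<bar>
      = \<bar>prob (E \<inter> X) / prob E - (prob (E \<inter> X) + prob ((F - E) \<inter> X)) / (prob E + prob (F - E))\<bar>"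
    unfolding measure_cond[OF assms(1,4)] measure_cond[OF assms(2,4)] F FX ..
  also have "\<dots> \<le> prob (F - E) / (prob E + prob (F - E))"
    using assms by (intro abs_ratio_diff_le finite_measure_mono) auto
  finally show ?thesis
    unfolding F .
qed

lemma (in prob_space) tv_dist_distr_cond_le:
  assumes "E \<in> events" "F \<in> events" "E \<subseteq> F" "g \<in> measurable M N"
  shows "tv_dist (distr (cond M E) N g) (distr (cond M F) N g) \<le> prob (F - E) / prob F"
  unfolding tv_dist_def sets_distr
proof (rule cSUP_least)
  show "sets N \<noteq> {}"
    using sets.empty_sets by blast
  fix A assume "A \<in> sets N"
  have "g \<in> measurable (cond M E) N" "g \<in> measurable (cond M F) N"
    using assms(4) by (simp_all add: cond_def)
  with \<open>A \<in> sets N\<close> show "\<bar>measure (distr (cond M E) N g) A - measure (distr (cond M F) N g) A\<bar>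
      \<le> prob (F - E) / prob F"
    using abs_measure_cond_diff_le[OF assms(1-3) measurable_sets[OF assms(4) \<open>A \<in> sets N\<close>]]
    by (simp add: measure_distr cond_def)
qed

section \<open>Configurations with a uniformly distributed anchor\<close>

locale uniform_anchor_small_spread = prob_space P for P :: "real set measure" +
  fixes u \<delta> \<epsilon> :: real
  assumes sets_eq_Cmeas: "sets P = sets (Cmeas u)"
    and u_pos: "0 < u"
    and delta_nonneg: "0 \<le> \<delta>"
    and anchor_uniform:
      "distr (cond P {Z \<in> space P. Z \<noteq> {}}) lborel anchor = uniform_measure lborel {0<..<u}"
    and spread_small: "measure (cond P {Z \<in> space P. Z \<noteq> {}}) {Z \<in> space P. spread Z \<ge> \<delta>} \<le> \<epsilon>"
begin

lemma space_P: "space P = closed_subsets u"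
  using sets_eq_imp_space_eq[OF sets_eq_Cmeas] by (simp add: space_Cmeas)

lemma measurable_P: "measurable P N = measurable (Cmeas u) N"
  by (rule measurable_cong_sets[OF sets_eq_Cmeas refl])

lemma hit_event: "compact K \<Longrightarrow> {Z \<in> space P. Z \<inter> K \<noteq> {}} \<in> events"
  using hit_compact_in_sets_Cmeas[of K u] by (simp add: sets_eq_Cmeas space_P space_Cmeas)

lemma nonempty_event: "{Z \<in> space P. Z \<noteq> {}} \<in> events"
proof -
  have "{Z \<in> space P. Z \<noteq> {}} = space (Cmeas u) - {Z \<in> space (Cmeas u). Z = {}}"
    by (auto simp: space_P space_Cmeas)
  then show ?thesis
    using sets.compl_sets[OF empty_in_sets_Cmeas[of u]] by (simp add: sets_eq_Cmeas)
qed

lemma anchor_measurable: "anchor \<in> borel_measurable P"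
  by (simp add: measurable_P borel_measurable_anchor)

lemma measure_cond_nonempty_anchor:
  assumes "B \<in> sets borel"
  shows "measure (cond P {Z \<in> space P. Z \<noteq> {}}) {Z \<in> space P. anchor Z \<in> B}
    = measure lborel ({0<..<u} \<inter> B) / u"
proof -
  let ?Q = "cond P {Z \<in> space P. Z \<noteq> {}}"
  have "anchor \<in> measurable ?Q lborel"
    using anchor_measurable by (simp add: cond_def)
  then have "measure ?Q {Z \<in> space P. anchor Z \<in> B} = measure (distr ?Q lborel anchor) B"
    using assms by (simp add: measure_distr cond_def vimage_def Int_def conj_commute)
  also have "\<dots> = measure lborel ({0<..<u} \<inter> B) / measure lborel {0<..<u}"
    using u_pos assms by (simp add: anchor_uniform)
  finally show ?thesis
    using u_pos by simp
qed

lemma anchor_event: "B \<in> sets borel \<Longrightarrow> {Z \<in> space P. anchor Z \<in> B} \<in> events"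
  using measurable_sets[OF anchor_measurable] by (simp add: vimage_def Int_def conj_commute)

lemma prob_nonempty_pos: "0 < prob {Z \<in> space P. Z \<noteq> {}}"
proof (rule ccontr)
  assume "\<not> 0 < prob {Z \<in> space P. Z \<noteq> {}}"
  then have "prob {Z \<in> space P. Z \<noteq> {}} = 0"
    using measure_nonneg[of P "{Z \<in> space P. Z \<noteq> {}}"] by linarith
  then have "measure (cond P {Z \<in> space P. Z \<noteq> {}}) {Z \<in> space P. anchor Z \<in> UNIV} = 0"
    using nonempty_event anchor_event[of UNIV] by (simp add: measure_cond)
  with measure_cond_nonempty_anchor[of UNIV] u_pos show False
    by simp
qed

lemma prob_nonempty_anchor:
  assumes "B \<in> sets borel"
  shows "prob {Z \<in> space P. Z \<noteq> {} \<and> anchor Z \<in> B}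
    = prob {Z \<in> space P. Z \<noteq> {}} * measure lborel ({0<..<u} \<inter> B) / u"
proof -
  have "{Z \<in> space P. Z \<noteq> {} \<and> anchor Z \<in> B} = {Z \<in> space P. Z \<noteq> {}} \<inter> {Z \<in> space P. anchor Z \<in> B}"
    by auto
  then show ?thesis
    using measure_cond[OF nonempty_event anchor_event[OF assms]]
      measure_cond_nonempty_anchor[OF assms] prob_nonempty_pos
    by (simp add: field_simps)
qed

lemma prob_hit_left_ge:
  assumes "0 \<le> c" "c \<le> u"
  shows "prob {Z \<in> space P. Z \<noteq> {}} * c / u \<le> prob {Z \<in> space P. Z \<inter> {0..c} \<noteq> {}}"
proof -
  have "{0<..<u} \<inter> {..<c} = {0<..<c}"
    using assms by auto
  then have "prob {Z \<in> space P. Z \<noteq> {}} * c / u = prob {Z \<in> space P. Z \<noteq> {} \<and> anchor Z \<in> {..<c}}"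
    using prob_nonempty_anchor[of "{..<c}"] assms by simp
  also have "\<dots> \<le> prob {Z \<in> space P. Z \<inter> {0..c} \<noteq> {}}"
  proof (intro finite_measure_mono subsetI)
    fix Z assume "Z \<in> {Z \<in> space P. Z \<noteq> {} \<and> anchor Z \<in> {..<c}}"
    then have "Z \<in> closed_subsets u" "anchor Z \<le> c" "Z \<noteq> {}"
      by (auto simp: space_P)
    then show "Z \<in> {Z \<in> space P. Z \<inter> {0..c} \<noteq> {}}"
      by (simp add: space_P anchor_le_iff)
  qed (rule hit_event, simp)
  finally show ?thesis .
qed

lemma prob_hit_right_ge:
  assumes "0 \<le> c" "c \<le> u"
  shows "prob {Z \<in> space P. Z \<noteq> {}} * (u - c) / u \<le> prob {Z \<in> space P. Z \<inter> {c..u} \<noteq> {}}"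
proof -
  have "{0<..<u} \<inter> {c<..} = {c<..<u}"
    using assms by auto
  then have "prob {Z \<in> space P. Z \<noteq> {}} * (u - c) / u
      = prob {Z \<in> space P. Z \<noteq> {} \<and> anchor Z \<in> {c<..}}"
    using prob_nonempty_anchor[of "{c<..}"] assms by simp
  also have "\<dots> \<le> prob {Z \<in> space P. Z \<inter> {c..u} \<noteq> {}}"
  proof (intro finite_measure_mono subsetI)
    fix Z assume "Z \<in> {Z \<in> space P. Z \<noteq> {} \<and> anchor Z \<in> {c<..}}"
    then have "Z \<in> closed_subsets u" "Z \<noteq> {}" "c < Inf Z"
      by (auto simp: space_P anchor_def split: if_splits)
    with closed_subsets_Inf_Sup(1,4)[of Z u] have "Inf Z \<in> Z \<inter> {c..u}"
      by auto
    with \<open>Z \<in> closed_subsets u\<close> show "Z \<in> {Z \<in> space P. Z \<inter> {c..u} \<noteq> {}}"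
      by (auto simp: space_P)
  qed (rule hit_event, simp)
  finally show ?thesis .
qed

lemma prob_straddle_le:
  "prob {Z \<in> space P. Z \<inter> {0..c} \<noteq> {} \<and> Z \<inter> {c..u} \<noteq> {}} \<le> (\<delta> / u + \<epsilon>) * prob {Z \<in> space P. Z \<noteq> {}}"
proof -
  let ?N = "{Z \<in> space P. Z \<noteq> {}}"
  define near where "near = {Z \<in> space P. Z \<noteq> {} \<and> anchor Z \<in> {c - \<delta><..c}}"
  define wide where "wide = ?N \<inter> {Z \<in> space P. spread Z \<ge> \<delta>}"
  have wide_event: "{Z \<in> space P. spread Z \<ge> \<delta>} \<in> events"
    using measurable_sets[of spread P borel "{\<delta>..}"] borel_measurable_spread[of u]
    by (simp add: measurable_P vimage_def Int_def conj_commute)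
  have "near \<in> events" "wide \<in> events"
    using nonempty_event wide_event anchor_event[of "{c - \<delta><..c}"]
    by (auto simp: near_def wide_def Int_def[symmetric])
  have straddle_subset: "{Z \<in> space P. Z \<inter> {0..c} \<noteq> {} \<and> Z \<inter> {c..u} \<noteq> {}} \<subseteq> near \<union> wide"
  proof
    fix Z assume "Z \<in> {Z \<in> space P. Z \<inter> {0..c} \<noteq> {} \<and> Z \<inter> {c..u} \<noteq> {}}"
    then obtain z1 z2 where Z: "Z \<in> closed_subsets u" "z1 \<in> Z" "z1 \<le> c" "z2 \<in> Z" "c \<le> z2"
      by (auto simp: space_P)
    then have "Z \<noteq> {}"
      by auto
    note bounds = closed_subsets_Inf_Sup[OF Z(1) this]
    have "anchor Z \<le> c" "c \<le> Sup Z"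
      using bounds(3) Z \<open>Z \<noteq> {}\<close> by (force simp: anchor_def)+
    then show "Z \<in> near \<union> wide"
      using Z(1) \<open>Z \<noteq> {}\<close> by (auto simp: near_def wide_def space_P spread_def anchor_def)
  qed
  have near_le: "prob near \<le> \<delta> / u * prob ?N"
  proof -
    have "measure lborel ({0<..<u} \<inter> {c - \<delta><..c}) \<le> measure lborel {c - \<delta><..c}"
      using delta_nonneg by (intro measure_mono_fmeasurable) (auto simp: fmeasurable_def)
    then have "measure lborel ({0<..<u} \<inter> {c - \<delta><..c}) \<le> \<delta>"
      using delta_nonneg by simp
    then show ?thesis
      unfolding near_def using prob_nonempty_anchor[of "{c - \<delta><..c}"] prob_nonempty_pos u_pos
      by (simp add: field_simps mult_left_mono)
  qed
  have wide_le: "prob wide \<le> \<epsilon> * prob ?N"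
  proof -
    have "prob wide = measure (cond P ?N) {Z \<in> space P. spread Z \<ge> \<delta>} * prob ?N"
      using measure_cond[OF nonempty_event wide_event] prob_nonempty_pos by (simp add: wide_def)
    also have "\<dots> \<le> \<epsilon> * prob ?N"
      using spread_small by (rule mult_right_mono) simp
    finally show ?thesis .
  qed
  have "prob {Z \<in> space P. Z \<inter> {0..c} \<noteq> {} \<and> Z \<inter> {c..u} \<noteq> {}} \<le> prob (near \<union> wide)"
    using straddle_subset \<open>near \<in> events\<close> \<open>wide \<in> events\<close> by (intro finite_measure_mono) auto
  also have "\<dots> \<le> prob near + prob wide"
    using \<open>near \<in> events\<close> \<open>wide \<in> events\<close> by (rule measure_Un_le)
  also have "\<dots> \<le> (\<delta> / u + \<epsilon>) * prob ?N"
    using near_le wide_le by (simp add: distrib_right)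
  finally show ?thesis .
qed


lemma tv_dist_cond_straddle_le:
  assumes "E \<in> events" "F \<in> events" "E \<subseteq> F"
    and "F - E \<subseteq> {Z \<in> space P. Z \<inter> {0..c} \<noteq> {} \<and> Z \<inter> {c..u} \<noteq> {}}"
    and "g \<in> measurable P M" "0 < w" "prob {Z \<in> space P. Z \<noteq> {}} * w / u \<le> prob F"
  shows "tv_dist (distr (cond P E) M g) (distr (cond P F) M g) \<le> (\<delta> + \<epsilon> * u) / w"
proof -
  let ?N = "{Z \<in> space P. Z \<noteq> {}}"
  have "prob (F - E) \<le> prob {Z \<in> space P. Z \<inter> {0..c} \<noteq> {} \<and> Z \<inter> {c..u} \<noteq> {}}"
    using assms(4) hit_event[of "{0..c}"] hit_event[of "{c..u}"]
    by (intro finite_measure_mono) (auto simp: Int_def[symmetric] sets.Int)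
  also have "\<dots> \<le> (\<delta> / u + \<epsilon>) * prob ?N"
    by (rule prob_straddle_le)
  finally have straddle: "prob (F - E) \<le> (\<delta> / u + \<epsilon>) * prob ?N" .
  have "0 < prob ?N * w / u"
    using prob_nonempty_pos u_pos assms(6) by simp
  then have "prob (F - E) / prob F \<le> (\<delta> / u + \<epsilon>) * prob ?N / (prob ?N * w / u)"
    using straddle assms(7) measure_nonneg[of P "F - E"] by (intro frac_le) linarith+
  also have "\<dots> = (\<delta> + \<epsilon> * u) / w"
    using prob_nonempty_pos u_pos assms(6) by (simp add: field_simps)
  finally show ?thesis
    using tv_dist_distr_cond_le[OF assms(1-3,5)] by linarith
qed

lemma tv_dist_restrict_left_le:
  assumes "0 < c" "c \<le> u"
  shows "tv_dist
      (distr (cond P {Z \<in> space P. Z \<inter> {0..c} \<noteq> {} \<and> Z \<inter> {c<..u} = {}}) (Cmeas c) (\<lambda>Z. Z \<inter> {0..c}))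
      (distr (cond P {Z \<in> space P. Z \<inter> {0..c} \<noteq> {}}) (Cmeas c) (\<lambda>Z. Z \<inter> {0..c}))
    \<le> (\<delta> + \<epsilon> * u) / c"
proof (rule tv_dist_cond_straddle_le)
  have "{Z \<in> space P. Z \<inter> {0..c} \<noteq> {} \<and> Z \<inter> {c<..u} = {}}
      = {Z \<in> space P. Z \<inter> {0..c} \<noteq> {}} - {Z \<in> space (Cmeas u). Z \<inter> {c<..} \<noteq> {}}"
  proof -
    have "Z \<inter> {c<..u} = Z \<inter> {c<..}" if "Z \<in> space P" for Z
      using that by (auto simp: space_P closed_subsets_def)
    then show ?thesis
      by (auto simp: space_P space_Cmeas)
  qed
  then show "{Z \<in> space P. Z \<inter> {0..c} \<noteq> {} \<and> Z \<inter> {c<..u} = {}} \<in> events"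
    using hit_event[of "{0..c}"] hit_open_in_sets_Cmeas[of "{c<..}" u]
    by (simp add: sets_eq_Cmeas sets.Diff)
  show "{Z \<in> space P. Z \<inter> {0..c} \<noteq> {}} \<in> events"
    by (simp add: hit_event)
  show "(\<lambda>Z. Z \<inter> {0..c}) \<in> measurable P (Cmeas c)"
    by (simp add: measurable_P measurable_restrict_Cmeas)
  show "prob {Z \<in> space P. Z \<noteq> {}} * c / u \<le> prob {Z \<in> space P. Z \<inter> {0..c} \<noteq> {}}"
    using assms by (intro prob_hit_left_ge) auto
qed (use assms in auto)

lemma tv_dist_shift_restrict_right_le:
  assumes "0 \<le> c" "0 < d" "c + d = u"
  shows "tv_dist
      (distr (cond P {Z \<in> space P. Z \<inter> {0..c} = {} \<and> Z \<inter> {c..u} \<noteq> {}}) (Cmeas d)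
        (\<lambda>Z. (\<lambda>r. r - c) ` (Z \<inter> {c..u})))
      (distr (cond P {Z \<in> space P. (\<lambda>r. r - c) ` (Z \<inter> {c..u}) \<noteq> {}}) (Cmeas d)
        (\<lambda>Z. (\<lambda>r. r - c) ` (Z \<inter> {c..u})))
    \<le> (\<delta> + \<epsilon> * u) / d"
proof (rule tv_dist_cond_straddle_le)
  have "{Z \<in> space P. Z \<inter> {0..c} = {} \<and> Z \<inter> {c..u} \<noteq> {}}
      = {Z \<in> space P. Z \<inter> {c..u} \<noteq> {}} - {Z \<in> space P. Z \<inter> {0..c} \<noteq> {}}"
    by auto
  then show "{Z \<in> space P. Z \<inter> {0..c} = {} \<and> Z \<inter> {c..u} \<noteq> {}} \<in> events"
    using hit_event[of "{0..c}"] hit_event[of "{c..u}"] by (simp add: sets.Diff)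
  show "{Z \<in> space P. (\<lambda>r. r - c) ` (Z \<inter> {c..u}) \<noteq> {}} \<in> events"
    by (simp add: hit_event)
  show "(\<lambda>Z. (\<lambda>r. r - c) ` (Z \<inter> {c..u})) \<in> measurable P (Cmeas d)"
    using assms by (simp add: measurable_P measurable_shift_restrict_Cmeas)
  show "prob {Z \<in> space P. Z \<noteq> {}} * d / u \<le> prob {Z \<in> space P. (\<lambda>r. r - c) ` (Z \<inter> {c..u}) \<noteq> {}}"
  proof -
    have "d = u - c"
      using assms(3) by linarith
    with assms show ?thesis
      using prob_hit_right_ge[of c] by simp
  qed
qed (use assms in auto)

end

lemma measurable_factorizing_family_prob_space:
  assumes "measurable_factorizing_family \<nu>" "0 < t"
  shows "prob_space (\<nu> t)" "sets (\<nu> t) = sets (Cmeas t)"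
  using assms(1)[unfolded measurable_factorizing_family_def, THEN conjunct1] assms(2) by blast+

theorem lemma4p25:
  fixes \<nu> :: "real \<Rightarrow> real set measure" and s t :: real
  assumes fam: "measurable_factorizing_family \<nu>"
    and s_pos: "s > 0" and t_pos: "t > 0"
    and AD: "\<exists>u0>0. \<forall>u. 0 < u \<and> u < u0 \<longrightarrow>
       distr (cond (\<nu> u) {Z \<in> space (\<nu> u). Z \<noteq> {}}) lborel anchor
          = uniform_measure lborel {0<..<u}
     \<and> measure (cond (\<nu> u) {Z \<in> space (\<nu> u). Z \<noteq> {}})
          {Z \<in> space (\<nu> u). spread Z \<ge> u\<^sup>2} \<le> u"
  shows "\<exists>C::real. \<exists>l0>0. \<forall>l. 0 < l \<and> l < l0 \<longrightarrow>
     (let u = l * (s + t); u1 = l * s; u2 = l * t;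
          E10 = {Z \<in> space (\<nu> u). Z \<inter> {0..u1} \<noteq> {} \<and> Z \<inter> {u1<..u} = {}};
          E01 = {Z \<in> space (\<nu> u). Z \<inter> {0..u1} = {} \<and> Z \<inter> {u1..u} \<noteq> {}};
          R1 = (\<lambda>Z. Z \<inter> {0..u1});
          R2 = (\<lambda>Z. (\<lambda>r. r - u1) ` (Z \<inter> {u1..u}));
          hat10 = distr (cond (\<nu> u) E10) (Cmeas u1) R1;
          hat01 = distr (cond (\<nu> u) E01) (Cmeas u2) R2;
          bar1 = distr (cond (\<nu> u) {Z \<in> space (\<nu> u). R1 Z \<noteq> {}}) (Cmeas u1) R1;
          bar2 = distr (cond (\<nu> u) {Z \<in> space (\<nu> u). R2 Z \<noteq> {}}) (Cmeas u2) R2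
      in tv_dist hat10 bar1 \<le> C * u \<and> tv_dist hat01 bar2 \<le> C * u)"
proof -
  obtain u0 where "0 < u0" and AD_u: "\<And>u. 0 < u \<Longrightarrow> u < u0 \<Longrightarrow>
       distr (cond (\<nu> u) {Z \<in> space (\<nu> u). Z \<noteq> {}}) lborel anchor = uniform_measure lborel {0<..<u}
     \<and> measure (cond (\<nu> u) {Z \<in> space (\<nu> u). Z \<noteq> {}}) {Z \<in> space (\<nu> u). spread Z \<ge> u\<^sup>2} \<le> u"
    using AD by blast
  have small: "uniform_anchor_small_spread (\<nu> u) u (u\<^sup>2) u" if "0 < u" "u < u0" for u
    using measurable_factorizing_family_prob_space[OF fam that(1)] AD_u[OF that] that
    by (intro uniform_anchor_small_spread.intro uniform_anchor_small_spread_axioms.intro) auto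
  define C where "C = 2 * (s + t) / s + 2 * (s + t) / t"
  show ?thesis
    apply (rule exI[of _ C], rule exI[of _ "u0 / (s + t)"], intro conjI allI impI)
    subgoal
      using \<open>0 < u0\<close> s_pos t_pos by simp
    subgoal premises l for l
    proof -
      define u where "u = l * (s + t)"
      have "0 < u" "u < u0"
        using l s_pos t_pos by (simp_all add: u_def pos_less_divide_eq mult.commute)
      then interpret uniform_anchor_small_spread "\<nu> u" u "u\<^sup>2" u
        by (rule small)
      have "(u\<^sup>2 + u * u) / (l * s) = 2 * (s + t) / s * u"
        "(u\<^sup>2 + u * u) / (l * t) = 2 * (s + t) / t * u"
        using l s_pos t_pos by (simp_all add: u_def power2_eq_square field_simps)
      moreover have "0 \<le> 2 * (s + t) / s * u" "0 \<le> 2 * (s + t) / t * u"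
        using \<open>0 < u\<close> s_pos t_pos by simp_all
      ultimately have "(u\<^sup>2 + u * u) / (l * s) \<le> C * u" "(u\<^sup>2 + u * u) / (l * t) \<le> C * u"
        unfolding C_def by (simp_all add: distrib_right)
      moreover have "0 < l * s" "l * s \<le> u" "0 < l * t" "l * s + l * t = u"
        using l s_pos t_pos by (simp_all add: u_def distrib_left)
      ultimately show ?thesis
        unfolding Let_def u_def[symmetric]
        using tv_dist_restrict_left_le[of "l * s"]
          tv_dist_shift_restrict_right_le[of "l * s" "l * t"]
        by (meson order_trans less_imp_le)
    qed
    done
qed

end
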